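(* Let $\mathcal{U}$ be a subspace of $\mathbb{R}^n$. If $u\circ u$ is strictly balanced for every nonzero $u\in\mathcal{U}$, then $\mathcal{U}$ is realizable.
   Context: $u\circ u$ denotes the entrywise square of $u\in\mathbb{R}^n$. A vector $w\in\mathbb{R}^n$ is strictly balanced if $|w_i|<\sum_{j\ne i}|w_j|$ for all $i$. A correlation matrix is a positive semidefinite matrix with unit diagonal; $\mathcal{U}$ is realizable if some $n\times n$ correlation matrix has nullspace containing $\mathcal{U}$. *)

theory Defs
  imports "HOL-Analysis.Analysis"
begin

definition hadamard_sq :: "real^'n \<Rightarrow> real^'n" where
  "hadamard_sq u = (\<chi> i. u $ i * u $ i)"

definition strictly_balanced :: "real^'n \<Rightarrow> bool" where
  "strictly_balanced w \<longleftrightarrow> (\<forall>i. \<bar>w $ i\<bar> < (\<Sum>j\<in>UNIV - {i}. \<bar>w $ j\<bar>))"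

definition psd_matrix :: "real^'n^'n \<Rightarrow> bool" where
  "psd_matrix C \<longleftrightarrow> transpose C = C \<and> (\<forall>x. 0 \<le> x \<bullet> (C *v x))"

definition correlation_matrix :: "real^'n^'n \<Rightarrow> bool" where
  "correlation_matrix C \<longleftrightarrow> psd_matrix C \<and> (\<forall>i. C $ i $ i = 1)"

definition null_space :: "real^'n^'n \<Rightarrow> (real^'n) set" where
  "null_space C = {x. C *v x = 0}"

definition realizable :: "(real^'n) set \<Rightarrow> bool" where
  "realizable U \<longleftrightarrow> (\<exists>C. correlation_matrix C \<and> U \<subseteq> null_space C)"

end

theory Submission
  imports Defs
begin

text \<open>Let \<open>P\<close> be the orthogonal projection onto \<open>\<U>\<close> and \<open>R = I - P\<close>. The \<open>j\<close>-th column of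
  \<open>P\<close> lies in \<open>\<U>\<close> and has squared norm \<open>P\<^sub>j\<^sub>j\<close>, so its balance condition at index \<open>j\<close> reads
  \<open>P\<^sub>j\<^sub>j\<^sup>2 < P\<^sub>j\<^sub>j - P\<^sub>j\<^sub>j\<^sup>2\<close>, i.e. \<open>P\<^sub>j\<^sub>j < 1/2\<close>. Hence in the entrywise square of \<open>R\<close> every
  diagonal entry exceeds \<open>1/4\<close> while every off-diagonal row sum is \<open>R\<^sub>j\<^sub>j - R\<^sub>j\<^sub>j\<^sup>2 \<le> 1/4\<close>.
  Brouwer's theorem then gives weights \<open>f \<ge> 0\<close> with \<open>\<Sum>\<^sub>k R\<^sub>j\<^sub>k\<^sup>2 f\<^sub>k = 1\<close> for all \<open>j\<close>, and
  \<open>R diag(f) R\<close> is a correlation matrix vanishing on \<open>\<U>\<close>.\<close>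

lemma orthogonal_projection_matrix:
  fixes U :: "(real^'n) set"
  assumes "subspace U"
  obtains P :: "real^'n^'n"
  where "transpose P = P" "P ** P = P" "\<And>x. P *v x \<in> U" "\<And>x. x \<in> U \<Longrightarrow> P *v x = x"
proof -
  obtain B where "B \<subseteq> U" and orth: "pairwise orthogonal B" and unit: "\<And>x. x \<in> B \<Longrightarrow> norm x = 1"
    and "independent B" and span_B: "span B = U"
    using orthonormal_basis_subspace[OF assms] by metis
  then have "finite B"
    using independent_imp_finite by blast
  define P :: "real^'n^'n" where "P = (\<chi> i j. \<Sum>b\<in>B. b$i * b$j)"
  have P_mult: "P *v x = (\<Sum>b\<in>B. (x \<bullet> b) *\<^sub>R b)" for x
    by (simp add: P_def matrix_vector_mult_def inner_vec_def vec_eq_iff sum_distrib_left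
        sum_distrib_right sum.swap[of _ B] mult_ac)
  have range: "P *v x \<in> U" for x
    unfolding P_mult span_B[symmetric] by (intro span_sum span_scale span_base)
  have fixed: "P *v x = x" if "x \<in> U" for x
    unfolding P_mult using orthonormal_basis_expand[OF orth unit _ \<open>finite B\<close>] that span_B by blast
  have "transpose P = P"
    by (simp add: P_def transpose_def vec_eq_iff mult.commute)
  moreover have "P ** P = P"
    unfolding matrix_eq by (simp add: matrix_vector_mul_assoc[symmetric] range fixed)
  ultimately show thesis
    using that range fixed by blast
qed

lemma symmetric_idempotent_complement:
  fixes P :: "real^'n^'n"
  assumes "transpose P = P" "P ** P = P"
  shows "transpose (mat 1 - P) = mat 1 - P" "(mat 1 - P) ** (mat 1 - P) = mat 1 - P"
proof -
  show "transpose (mat 1 - P) = mat 1 - P"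
    using assms(1) by (simp add: transpose_def vec_eq_iff mat_def)
  have "P *v (P *v x) = P *v x" for x
    using assms(2) by (simp add: matrix_vector_mul_assoc)
  then have "(mat 1 - P) *v ((mat 1 - P) *v x) = (mat 1 - P) *v x" for x
    by (simp add: algebra_simps)
  then show "(mat 1 - P) ** (mat 1 - P) = mat 1 - P"
    unfolding matrix_eq by (simp add: matrix_vector_mul_assoc)
qed

lemma row_sum_squares_symmetric_idempotent:
  fixes M :: "real^'n^'n"
  assumes "transpose M = M" "M ** M = M"
  shows "(\<Sum>k\<in>UNIV. (M$j$k)^2) = M$j$j"
proof -
  have "M$k$j = M$j$k" for k
    using assms(1) by (metis transpose_def vec_lambda_beta)
  then have "(M ** M)$j$j = (\<Sum>k\<in>UNIV. (M$j$k)^2)"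
    by (simp add: matrix_matrix_mult_def power2_eq_square)
  then show ?thesis
    using assms(2) by simp
qed

lemma off_diagonal_row_sum_squares_symmetric_idempotent:
  fixes M :: "real^'n^'n"
  assumes "transpose M = M" "M ** M = M"
  shows "(\<Sum>k\<in>UNIV - {j}. (M$j$k)^2) \<le> 1/4"
proof -
  have "(\<Sum>k\<in>UNIV - {j}. (M$j$k)^2) = M$j$j - (M$j$j)^2"
    using row_sum_squares_symmetric_idempotent[OF assms, of j]
      sum.remove[of UNIV j "\<lambda>k. (M$j$k)^2"] by simp
  also have "\<dots> \<le> 1/4"
    using zero_le_power2[of "2 * M$j$j - 1"] by (simp add: power2_eq_square algebra_simps)
  finally show ?thesis .
qed

lemma diagonal_lt_half_if_column_balanced:
  fixes P :: "real^'n^'n"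
  assumes "transpose P = P" "P ** P = P"
    and balanced: "column j P \<noteq> 0 \<Longrightarrow> strictly_balanced (hadamard_sq (column j P))"
  shows "P$j$j < 1/2"
proof (cases "column j P = 0")
  case True
  then show ?thesis
    by (metis column_def vec_lambda_beta zero_index zero_less_divide_1_iff zero_less_numeral)
next
  case False
  have col: "column j P $ k = P$j$k" for k
    using assms(1) by (metis column_def transpose_def vec_lambda_beta)
  have "(P$j$j)^2 < (\<Sum>k\<in>UNIV - {j}. (P$j$k)^2)"
    using balanced[OF False] by (simp add: strictly_balanced_def hadamard_sq_def col power2_eq_square)
  also have "\<dots> = P$j$j - (P$j$j)^2"
    using row_sum_squares_symmetric_idempotent[OF assms(1,2), of j]
      sum.remove[of UNIV j "\<lambda>k. (P$j$k)^2"] by simp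
  finally have sq_lt: "(P$j$j)^2 < P$j$j - (P$j$j)^2" .
  then have "0 < P$j$j"
    using zero_le_power2[of "P$j$j"] by linarith
  moreover have "P$j$j * (2 * P$j$j) < P$j$j * 1"
    using sq_lt by (simp add: power2_eq_square algebra_simps)
  ultimately show ?thesis
    by (simp add: mult_less_cancel_left_pos)
qed

lemma nonneg_solution_uniformly_dominant:
  fixes S :: "real^'n^'n"
  assumes "0 < c" and nonneg: "\<And>j k. 0 \<le> S$j$k" and diag: "\<And>j. c \<le> S$j$j"
    and off_diag: "\<And>j. (\<Sum>k\<in>UNIV - {j}. S$j$k) \<le> c"
  obtains f :: "real^'n" where "\<And>k. 0 \<le> f$k" "\<And>j. (\<Sum>k\<in>UNIV. S$j$k * f$k) = 1"
proof -
  define off where "off f j = (\<Sum>k\<in>UNIV - {j}. S$j$k * f$k)" for f :: "real^'n" and j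
  \<comment> \<open>\<open>T f\<close> solves the \<open>j\<close>-th equation for \<open>f$j\<close>; its fixed points are the solutions.\<close>
  define T where "T f = (\<chi> j. (1 - off f j) / S$j$j)" for f
  define box where "box = cbox (0::real^'n) (\<chi> k. 1/c)"
  have in_box: "f \<in> box \<longleftrightarrow> (\<forall>k. 0 \<le> f$k \<and> f$k \<le> 1/c)" for f
    by (simp add: box_def mem_box_cart)
  have diag_pos: "0 < S$j$j" for j
    using \<open>0 < c\<close> diag[of j] by linarith
  have "continuous_on box T"
    unfolding T_def off_def using diag_pos
    by (intro continuous_on_vec_lambda continuous_intros) (metis less_irrefl)
  moreover have "T \<in> box \<rightarrow> box"
  proof
    fix f assume "f \<in> box"
    then have f: "0 \<le> f$k" "f$k \<le> 1/c" for k
      using in_box by blast+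
    show "T f \<in> box" unfolding in_box
    proof
      fix j
      have off_nonneg: "0 \<le> off f j"
        unfolding off_def using f nonneg by (intro sum_nonneg) auto
      have "off f j \<le> (\<Sum>k\<in>UNIV - {j}. S$j$k * (1/c))"
        unfolding off_def using f nonneg by (intro sum_mono mult_left_mono) auto
      also have "\<dots> = (\<Sum>k\<in>UNIV - {j}. S$j$k) / c"
        by (simp add: sum_divide_distrib)
      also have "\<dots> \<le> 1"
        using off_diag[of j] \<open>0 < c\<close> by simp
      finally have "off f j \<le> 1" .
      moreover have "1 / S$j$j \<le> 1/c"
        using diag[of j] \<open>0 < c\<close> by (simp add: frac_le)
      ultimately have "0 \<le> (1 - off f j) / S$j$j" "(1 - off f j) / S$j$j \<le> 1/c"
        using off_nonneg diag_pos[of j] divide_right_mono[of "1 - off f j" 1 "S$j$j"] by auto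
      then show "0 \<le> T f $ j \<and> T f $ j \<le> 1/c"
        by (simp add: T_def)
    qed
  qed
  moreover have "compact box" "convex box" "box \<noteq> {}"
    using in_box[of 0] \<open>0 < c\<close> by (auto simp: box_def compact_cbox convex_box)
  ultimately obtain f where "f \<in> box" "T f = f"
    using brouwer by metis
  show thesis
  proof (rule that)
    show "0 \<le> f$k" for k
      using \<open>f \<in> box\<close> in_box by blast
    fix j
    have "(1 - off f j) / S$j$j = f$j"
      using \<open>T f = f\<close> by (metis T_def vec_lambda_beta)
    then have "S$j$j * f$j + off f j = 1"
      using diag_pos[of j] by (simp add: field_simps)
    then show "(\<Sum>k\<in>UNIV. S$j$k * f$k) = 1"
      unfolding off_def using sum.remove[of UNIV j "\<lambda>k. S$j$k * f$k"] by simp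
  qed
qed

definition weighted_gram :: "real^'k^'n \<Rightarrow> real^'k \<Rightarrow> real^'n^'n" where
  "weighted_gram R f = (\<chi> i j. \<Sum>k\<in>UNIV. f$k * R$i$k * R$j$k)"

lemma weighted_gram_mult_vec:
  "weighted_gram R f *v x = (\<Sum>k\<in>UNIV. (f$k * (column k R \<bullet> x)) *\<^sub>R column k R)"
proof -
  have "(weighted_gram R f *v x) $ i = (\<Sum>k\<in>UNIV. f$k * (column k R \<bullet> x) * R$i$k)" for i
  proof -
    have "(weighted_gram R f *v x) $ i = (\<Sum>j\<in>UNIV. \<Sum>k\<in>UNIV. f$k * R$i$k * R$j$k * x$j)"
      by (simp add: weighted_gram_def matrix_vector_mult_def sum_distrib_right)
    also have "\<dots> = (\<Sum>k\<in>UNIV. \<Sum>j\<in>UNIV. f$k * R$i$k * R$j$k * x$j)"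
      by (rule sum.swap)
    also have "\<dots> = (\<Sum>k\<in>UNIV. f$k * (column k R \<bullet> x) * R$i$k)"
      by (simp add: column_def inner_vec_def sum_distrib_left mult_ac)
    finally show ?thesis .
  qed
  then show ?thesis
    by (simp add: vec_eq_iff column_def)
qed

lemma psd_weighted_gram:
  assumes "\<And>k. 0 \<le> f$k"
  shows "psd_matrix (weighted_gram R f)"
  unfolding psd_matrix_def
proof (intro conjI allI)
  show "transpose (weighted_gram R f) = weighted_gram R f"
    by (simp add: weighted_gram_def transpose_def vec_eq_iff mult_ac)
  fix x
  have "x \<bullet> (weighted_gram R f *v x) = (\<Sum>k\<in>UNIV. f$k * (column k R \<bullet> x)^2)"
    by (simp add: weighted_gram_mult_vec inner_sum_right inner_commute power2_eq_square mult_ac)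
  also have "\<dots> \<ge> 0"
    using assms by (intro sum_nonneg) simp
  finally show "0 \<le> x \<bullet> (weighted_gram R f *v x)" .
qed

lemma weighted_gram_diagonal:
  "weighted_gram R f $ i $ i = (\<Sum>k\<in>UNIV. (R$i$k)^2 * f$k)"
  by (simp add: weighted_gram_def power2_eq_square mult_ac)

lemma weighted_gram_mult_vec_eq_0:
  assumes "x v* R = 0"
  shows "weighted_gram R f *v x = 0"
proof -
  have "column k R \<bullet> x = (x v* R) $ k" for k
    by (simp add: column_def inner_vec_def vector_matrix_mult_def mult.commute)
  then show ?thesis
    using assms by (simp add: weighted_gram_mult_vec)
qed

theorem corollary4p5:
  fixes U :: "(real^'n) set"
  assumes "subspace U"
    and "\<And>u. u \<in> U \<Longrightarrow> u \<noteq> 0 \<Longrightarrow> strictly_balanced (hadamard_sq u)"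
  shows "realizable U"
proof -
  obtain P where P: "transpose P = P" "P ** P = P" "\<And>x. P *v x \<in> U" "\<And>x. x \<in> U \<Longrightarrow> P *v x = x"
    using orthogonal_projection_matrix[OF assms(1)] by blast
  define R where "R = mat 1 - P"
  have R: "transpose R = R" "R ** R = R"
    unfolding R_def using symmetric_idempotent_complement[OF P(1,2)] by simp_all
  have "(1/2)^2 \<le> (R$j$j)^2" for j
  proof -
    have "column j P \<in> U"
      using P(3) matrix_vector_mult_basis by metis
    then have "P$j$j < 1/2"
      using diagonal_lt_half_if_column_balanced[OF P(1,2)] assms(2) by blast
    then show ?thesis
      by (intro power_mono) (simp_all add: R_def mat_def)
  qed
  then obtain f where f_nonneg: "\<And>k. 0 \<le> f$k" and f_solves: "\<And>j. (\<Sum>k\<in>UNIV. (R$j$k)^2 * f$k) = 1"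
    using nonneg_solution_uniformly_dominant[of "1/4" "\<chi> j k. (R$j$k)^2"]
      off_diagonal_row_sum_squares_symmetric_idempotent[OF R] by (auto simp: power2_eq_square)
  have "correlation_matrix (weighted_gram R f)"
    using psd_weighted_gram[OF f_nonneg] f_solves
    by (simp add: correlation_matrix_def weighted_gram_diagonal)
  moreover have "U \<subseteq> null_space (weighted_gram R f)"
  proof
    fix x assume "x \<in> U"
    then have "R *v x = 0"
      using P(4) by (simp add: R_def algebra_simps)
    then have "x v* R = 0"
      using R(1) by (metis transpose_matrix_vector)
    then show "x \<in> null_space (weighted_gram R f)"
      by (simp add: null_space_def weighted_gram_mult_vec_eq_0)
  qed
  ultimately show ?thesis
    unfolding realizable_def by blast
qed

end
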